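(* Let $G$ be a graph with a tree decomposition $\mathcal{T}$ of width $w$, and let $\mathcal{F}=\{F_1,\dots,F_k\}$ be a set of forests, each a subgraph of $G$ consisting of vertex-disjoint rooted trees. Then there is a tree decomposition $\mathcal{T}'$ of $G$ of width $O(wk)$ such that for every tree $T$ of every forest in $\mathcal{F}$ and every vertex $v\in V(T)$, some bag of $\mathcal{T}'$ contains both $v$ and the root of $T$.
   Context: Standard tree decompositions: a tree whose nodes (bags) are vertex subsets such that every vertex lies in some bag, every edge has both endpoints in some bag, and the bags containing any fixed vertex form a connected subtree; width = maximum bag size minus one. *)

theory Defs
  imports Main
begin

definition graph :: "'a set \<Rightarrow> 'a set set \<Rightarrow> bool" where
  "graph V E \<longleftrightarrow> finite V \<and> (\<forall>e\<in>E. \<exists>x y. x \<in> V \<and> y \<in> V \<and> x \<noteq> y \<and> e = {x, y})"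

definition adj :: "'a set set \<Rightarrow> 'a \<Rightarrow> 'a \<Rightarrow> bool" where
  "adj E x y \<longleftrightarrow> {x, y} \<in> E"

definition reachable :: "'a set \<Rightarrow> 'a set set \<Rightarrow> 'a \<Rightarrow> 'a \<Rightarrow> bool" where
  "reachable V E x y \<longleftrightarrow> x \<in> V \<and> y \<in> V \<and> (adj E)\<^sup>*\<^sup>* x y"

definition connected_graph :: "'a set \<Rightarrow> 'a set set \<Rightarrow> bool" where
  "connected_graph V E \<longleftrightarrow> (\<forall>x\<in>V. \<forall>y\<in>V. reachable V E x y)"

definition is_cycle :: "'a set set \<Rightarrow> 'a list \<Rightarrow> bool" where
  "is_cycle E xs \<longleftrightarrow> length xs \<ge> 3 \<and> distinct xs \<and>
     (\<forall>i < length xs. {xs ! i, xs ! ((i + 1) mod length xs)} \<in> E)"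

definition forest :: "'a set \<Rightarrow> 'a set set \<Rightarrow> bool" where
  "forest V E \<longleftrightarrow> graph V E \<and> \<not> (\<exists>xs. is_cycle E xs)"

definition tree :: "'a set \<Rightarrow> 'a set set \<Rightarrow> bool" where
  "tree V E \<longleftrightarrow> forest V E \<and> V \<noteq> {} \<and> connected_graph V E"

definition induced_edges :: "'a set set \<Rightarrow> 'a set \<Rightarrow> 'a set set" where
  "induced_edges E S = {e \<in> E. e \<subseteq> S}"

definition tree_decomposition ::
  "'a set \<Rightarrow> 'a set set \<Rightarrow> 'b set \<Rightarrow> 'b set set \<Rightarrow> ('b \<Rightarrow> 'a set) \<Rightarrow> bool" where
  "tree_decomposition V E TV TE B \<longleftrightarrow>
     tree TV TE \<and>
     (\<forall>t\<in>TV. B t \<subseteq> V) \<and>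
     (\<forall>v\<in>V. \<exists>t\<in>TV. v \<in> B t) \<and>
     (\<forall>e\<in>E. \<exists>t\<in>TV. e \<subseteq> B t) \<and>
     (\<forall>v\<in>V. connected_graph {t\<in>TV. v \<in> B t} (induced_edges TE {t\<in>TV. v \<in> B t}))"

definition td_width :: "'b set \<Rightarrow> ('b \<Rightarrow> 'a set) \<Rightarrow> nat" where
  "td_width TV B = Max ((\<lambda>t. card (B t)) ` TV) - 1"

definition rooted_forest_subgraph ::
  "'a set \<Rightarrow> 'a set set \<Rightarrow> 'a set \<Rightarrow> 'a set set \<Rightarrow> 'a set \<Rightarrow> bool" where
  "rooted_forest_subgraph V E FV FE R \<longleftrightarrow>
     forest FV FE \<and> FV \<subseteq> V \<and> FE \<subseteq> E \<and> R \<subseteq> FV \<and>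
     (\<forall>v\<in>FV. \<exists>!r\<in>R. reachable FV FE v r)"

end

theory Submission
  imports Defs
begin

text \<open>Add to every bag, for each of the forests, the roots of all trees that meet the bag.
  Since a vertex lies in at most one tree of each forest, a bag of size at most \<open>w + 1\<close>
  grows to size at most \<open>(w + 1) (k + 1)\<close>. The result is still a tree decomposition: the
  nodes whose new bag contains a root \<open>r\<close> are exactly those whose old bag meets the tree
  of \<open>r\<close>, and these form a connected subtree, because every edge of that tree lies in
  some bag and the nodes containing any fixed vertex are connected.\<close>

lemma adj_sym: "adj E x y \<Longrightarrow> adj E y x"
  by (simp add: adj_def insert_commute)

lemma rtranclp_adj_sym: "(adj E)\<^sup>*\<^sup>* x y \<Longrightarrow> (adj E)\<^sup>*\<^sup>* y x"
  by (induction rule: rtranclp.induct) (auto intro: converse_rtranclp_into_rtranclp adj_sym)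

lemma reachable_sym: "reachable V E x y \<Longrightarrow> reachable V E y x"
  by (auto simp: reachable_def intro: rtranclp_adj_sym)

lemma reachable_trans: "reachable V E x y \<Longrightarrow> reachable V E y z \<Longrightarrow> reachable V E x z"
  by (auto simp: reachable_def intro: rtranclp_trans)

lemma reachable_induced_mono:
  assumes "M \<subseteq> M'" and "reachable M (induced_edges E M) x y"
  shows "reachable M' (induced_edges E M') x y"
proof -
  have "adj (induced_edges E M) \<le> adj (induced_edges E M')"
    using assms(1) by (auto simp: adj_def induced_edges_def)
  then have "(adj (induced_edges E M))\<^sup>*\<^sup>* \<le> (adj (induced_edges E M'))\<^sup>*\<^sup>*"
    by (rule rtranclp_mono)
  then show ?thesis
    using assms by (auto simp: reachable_def)
qed

lemma reachable_iff_rtranclp: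
  assumes "graph V E" and "y \<in> V"
  shows "reachable V E x y \<longleftrightarrow> (adj E)\<^sup>*\<^sup>* x y"
proof -
  have "x \<in> V" if "(adj E)\<^sup>*\<^sup>* x y"
    using that
  proof (induction rule: converse_rtranclp_induct)
    case (step x z)
    then show ?case
      using assms(1) by (auto simp: graph_def adj_def doubleton_eq_iff)
  qed (rule assms(2))
  then show ?thesis
    using assms(2) by (auto simp: reachable_def)
qed

lemma connected_graph_induced_if_reaches_connected:
  assumes "S \<subseteq> M" and "connected_graph S (induced_edges E S)"
    and "\<And>x. x \<in> M \<Longrightarrow> \<exists>s\<in>S. reachable M (induced_edges E M) x s"
  shows "connected_graph M (induced_edges E M)"
  unfolding connected_graph_def
proof (intro ballI)
  fix x y assume "x \<in> M" "y \<in> M"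
  then obtain s s' where "s \<in> S" "reachable M (induced_edges E M) x s"
      and "s' \<in> S" "reachable M (induced_edges E M) y s'"
    using assms(3) by blast
  moreover have "reachable M (induced_edges E M) s s'"
    using assms(1,2) \<open>s \<in> S\<close> \<open>s' \<in> S\<close>
    by (auto simp: connected_graph_def intro: reachable_induced_mono)
  ultimately show "reachable M (induced_edges E M) x y"
    by (meson reachable_sym reachable_trans)
qed

lemma tree_decomposition_follow_walk:
  assumes td: "tree_decomposition V E TV TE B" and "E' \<subseteq> E"
    and walk: "(adj E')\<^sup>*\<^sup>* u x"
    and M: "\<And>z. (adj E')\<^sup>*\<^sup>* z x \<Longrightarrow> {t\<in>TV. z \<in> B t} \<subseteq> M"
    and "t \<in> TV" "u \<in> B t"
  shows "\<exists>t'\<in>TV. x \<in> B t' \<and> reachable M (induced_edges TE M) t t'"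
  using walk \<open>t \<in> TV\<close> \<open>u \<in> B t\<close> M
proof (induction u arbitrary: t rule: converse_rtranclp_induct)
  case base
  then have "t \<in> M" by blast
  with base show ?case by (auto simp: reachable_def)
next
  case (step u u')
  have "{u, u'} \<in> E"
    using step(1) \<open>E' \<subseteq> E\<close> by (auto simp: adj_def)
  then obtain t'' where t'': "t'' \<in> TV" "{u, u'} \<subseteq> B t''"
    using td by (auto simp: tree_decomposition_def)
  have "u \<in> V"
    using td step(4,5) by (auto simp: tree_decomposition_def)
  then have "reachable {s\<in>TV. u \<in> B s} (induced_edges TE {s\<in>TV. u \<in> B s}) t t''"
    using td step(4,5) t'' by (auto simp: tree_decomposition_def connected_graph_def)
  moreover have "{s\<in>TV. u \<in> B s} \<subseteq> M"
    using step(1,2,6) by (meson converse_rtranclp_into_rtranclp)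
  ultimately have "reachable M (induced_edges TE M) t t''"
    by (rule reachable_induced_mono[rotated])
  moreover obtain t' where "t' \<in> TV" "x \<in> B t'" "reachable M (induced_edges TE M) t'' t'"
    using step.IH[OF t''(1)] t'' step(6) by blast
  ultimately show ?case
    by (meson reachable_trans)
qed

definition add_roots ::
  "'i set \<Rightarrow> ('i \<Rightarrow> 'a set) \<Rightarrow> ('i \<Rightarrow> 'a set set) \<Rightarrow> ('i \<Rightarrow> 'a set) \<Rightarrow> ('b \<Rightarrow> 'a set) \<Rightarrow> 'b \<Rightarrow> 'a set"
  where "add_roots I FV FE R B t =
    B t \<union> {r. \<exists>i\<in>I. r \<in> R i \<and> (\<exists>v\<in>B t. reachable (FV i) (FE i) v r)}"

lemma tree_decomposition_add_roots:
  assumes td: "tree_decomposition V E TV TE B"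
    and sub: "\<And>i. i \<in> I \<Longrightarrow> graph (FV i) (FE i) \<and> FV i \<subseteq> V \<and> FE i \<subseteq> E"
  shows "tree_decomposition V E TV TE (add_roots I FV FE R B)"
proof -
  let ?B' = "add_roots I FV FE R B"
  have connected: "connected_graph {t\<in>TV. x \<in> ?B' t} (induced_edges TE {t\<in>TV. x \<in> ?B' t})"
    if "x \<in> V" for x
  proof (rule connected_graph_induced_if_reaches_connected)
    let ?M = "{t\<in>TV. x \<in> ?B' t}"
    show "{t\<in>TV. x \<in> B t} \<subseteq> ?M"
      by (auto simp: add_roots_def)
    show "connected_graph {t\<in>TV. x \<in> B t} (induced_edges TE {t\<in>TV. x \<in> B t})"
      using td \<open>x \<in> V\<close> by (simp add: tree_decomposition_def)
    fix t assume t: "t \<in> ?M"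
    show "\<exists>s\<in>{t\<in>TV. x \<in> B t}. reachable ?M (induced_edges TE ?M) t s"
    proof (cases "x \<in> B t")
      case True
      with t show ?thesis by (auto simp: reachable_def)
    next
      case False
      then obtain i v where i: "i \<in> I" "x \<in> R i" and v: "v \<in> B t"
        and reach_vx: "reachable (FV i) (FE i) v x"
        using t by (auto simp: add_roots_def)
      have graph: "graph (FV i) (FE i)" and "FE i \<subseteq> E"
        using sub[OF i(1)] by auto
      have x: "x \<in> FV i"
        using reach_vx by (simp add: reachable_def)
      have "{s\<in>TV. z \<in> B s} \<subseteq> ?M" if "(adj (FE i))\<^sup>*\<^sup>* z x" for z
        using that i reachable_iff_rtranclp[OF graph x] by (auto simp: add_roots_def)
      moreover have "(adj (FE i))\<^sup>*\<^sup>* v x"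
        using reach_vx by (simp add: reachable_def)
      ultimately obtain t' where "t' \<in> TV" "x \<in> B t'" "reachable ?M (induced_edges TE ?M) t t'"
        using tree_decomposition_follow_walk[OF td \<open>FE i \<subseteq> E\<close>] t v by blast
      then show ?thesis by blast
    qed
  qed
  have "\<forall>t\<in>TV. ?B' t \<subseteq> V"
    using td sub unfolding tree_decomposition_def add_roots_def reachable_def by blast
  moreover have "B t \<subseteq> ?B' t" for t
    by (simp add: add_roots_def)
  then have "(\<forall>v\<in>V. \<exists>t\<in>TV. v \<in> ?B' t) \<and> (\<forall>e\<in>E. \<exists>t\<in>TV. e \<subseteq> ?B' t)"
    using td unfolding tree_decomposition_def by (meson subsetD subset_trans)
  ultimately show ?thesis
    using td connected by (simp add: tree_decomposition_def)
qed

lemma card_related_le: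
  assumes "finite X" and "\<And>v r r'. v \<in> X \<Longrightarrow> P v r \<Longrightarrow> P v r' \<Longrightarrow> r = r'"
  shows "card {r. \<exists>v\<in>X. P v r} \<le> card X"
proof -
  have "{r. \<exists>v\<in>X. P v r} \<subseteq> (\<lambda>v. THE r. P v r) ` X"
    using assms(2) by (auto intro!: image_eqI the_equality[symmetric])
  then have "card {r. \<exists>v\<in>X. P v r} \<le> card ((\<lambda>v. THE r. P v r) ` X)"
    using assms(1) by (intro card_mono) auto
  also have "\<dots> \<le> card X"
    by (rule card_image_le[OF assms(1)])
  finally show ?thesis .
qed

lemma card_add_roots_le:
  assumes "finite I" and "finite (B t)"
    and unique: "\<And>i v r r'. i \<in> I \<Longrightarrow> r \<in> R i \<Longrightarrow> r' \<in> R i \<Longrightarrow>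
      reachable (FV i) (FE i) v r \<Longrightarrow> reachable (FV i) (FE i) v r' \<Longrightarrow> r = r'"
  shows "card (add_roots I FV FE R B t) \<le> card (B t) * (card I + 1)"
proof -
  let ?roots = "\<lambda>i. {r. \<exists>v\<in>B t. r \<in> R i \<and> reachable (FV i) (FE i) v r}"
  have "add_roots I FV FE R B t = B t \<union> (\<Union>i\<in>I. ?roots i)"
    by (auto simp: add_roots_def)
  then have "card (add_roots I FV FE R B t) \<le> card (B t) + card (\<Union>i\<in>I. ?roots i)"
    by (simp add: card_Un_le)
  also have "\<dots> \<le> card (B t) + (\<Sum>i\<in>I. card (?roots i))"
    using card_UN_le[OF assms(1)] by simp
  also have "\<dots> \<le> card (B t) + (\<Sum>i\<in>I. card (B t))"
    using unique by (intro add_left_mono sum_mono card_related_le[OF assms(2)]) blast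
  finally show ?thesis
    by (simp add: algebra_simps)
qed

lemma td_width_le_iff:
  assumes "finite TV" and "TV \<noteq> {}"
  shows "td_width TV B \<le> n \<longleftrightarrow> (\<forall>t\<in>TV. card (B t) \<le> n + 1)"
proof -
  have "td_width TV B \<le> n \<longleftrightarrow> Max ((\<lambda>t. card (B t)) ` TV) \<le> n + 1"
    unfolding td_width_def by linarith
  also have "\<dots> \<longleftrightarrow> (\<forall>t\<in>TV. card (B t) \<le> n + 1)"
    using assms by simp
  finally show ?thesis .
qed

lemma tree_decomposition_finite_nonempty:
  "tree_decomposition V E TV TE B \<Longrightarrow> finite TV \<and> TV \<noteq> {}"
  by (simp add: tree_decomposition_def tree_def forest_def graph_def)

lemma td_width_add_roots_le:
  assumes td: "tree_decomposition V E TV TE B" and "finite V" and "finite I"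
    and unique: "\<And>i v r r'. i \<in> I \<Longrightarrow> r \<in> R i \<Longrightarrow> r' \<in> R i \<Longrightarrow>
      reachable (FV i) (FE i) v r \<Longrightarrow> reachable (FV i) (FE i) v r' \<Longrightarrow> r = r'"
  shows "td_width TV (add_roots I FV FE R B) + 1 \<le> (td_width TV B + 1) * (card I + 1)"
proof -
  have TV: "finite TV" "TV \<noteq> {}"
    using tree_decomposition_finite_nonempty[OF td] by auto
  have "card (add_roots I FV FE R B t) \<le> (td_width TV B + 1) * (card I + 1)" if "t \<in> TV" for t
  proof -
    have "finite (B t)"
      using td \<open>finite V\<close> that by (meson finite_subset tree_decomposition_def)
    then have "card (add_roots I FV FE R B t) \<le> card (B t) * (card I + 1)"
      by (rule card_add_roots_le[OF \<open>finite I\<close> _ unique])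
    moreover have "card (B t) \<le> td_width TV B + 1"
      using td_width_le_iff[OF TV, of B "td_width TV B"] that by simp
    ultimately show ?thesis
      by (meson le_trans mult_le_mono1)
  qed
  moreover have "(td_width TV B + 1) * (card I + 1) = (td_width TV B * (card I + 1) + card I) + 1"
    by simp
  ultimately have "td_width TV (add_roots I FV FE R B) \<le> td_width TV B * (card I + 1) + card I"
    unfolding td_width_le_iff[OF TV] by (simp add: add_ac)
  then show ?thesis
    by simp
qed

lemma add_roots_joins_vertex_root:
  assumes "tree_decomposition V E TV TE B" and "FV i \<subseteq> V" and "i \<in> I"
    and "r \<in> R i" and "reachable (FV i) (FE i) v r"
  shows "\<exists>t\<in>TV. v \<in> add_roots I FV FE R B t \<and> r \<in> add_roots I FV FE R B t"
proof -
  have "v \<in> V"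
    using assms(2,5) by (auto simp: reachable_def)
  then obtain t where "t \<in> TV" "v \<in> B t"
    using assms(1) by (auto simp: tree_decomposition_def)
  then show ?thesis
    using assms(3-5) by (auto simp: add_roots_def)
qed

lemma rooted_forest_subgraph_root_unique:
  assumes "rooted_forest_subgraph V E F FE R" and "r \<in> R" and "r' \<in> R"
    and "reachable F FE v r" and "reachable F FE v r'"
  shows "r = r'"
proof -
  have "v \<in> F"
    using assms(4) by (simp add: reachable_def)
  then have "\<exists>!r\<in>R. reachable F FE v r"
    using assms(1) by (simp add: rooted_forest_subgraph_def)
  then show ?thesis
    using assms(2-5) by blast
qed

theorem lemma6p2:
  shows "\<exists>c::nat. \<forall>(V::nat set) E (TV::nat set) TE B w k
            (FV::nat \<Rightarrow> nat set) FE R.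
     graph V E \<and> tree_decomposition V E TV TE B \<and> td_width TV B = w \<and>
     (\<forall>i<k. rooted_forest_subgraph V E (FV i) (FE i) (R i)) \<longrightarrow>
     (\<exists>(TV'::nat set) TE' B'.
        tree_decomposition V E TV' TE' B' \<and>
        td_width TV' B' \<le> c * (w + 1) * (k + 1) \<and>
        (\<forall>i<k. \<forall>r\<in>R i. \<forall>v\<in>FV i. reachable (FV i) (FE i) v r \<longrightarrow>
            (\<exists>t\<in>TV'. v \<in> B' t \<and> r \<in> B' t)))"
proof (intro exI[of _ 1] allI impI, elim conjE)
  fix V :: "nat set" and E and TV :: "nat set" and TE B w k and FV :: "nat \<Rightarrow> nat set" and FE R
  assume "graph V E" and td: "tree_decomposition V E TV TE B" and "td_width TV B = w"
    and forests: "\<forall>i<k. rooted_forest_subgraph V E (FV i) (FE i) (R i)"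
  let ?B' = "add_roots {..<k} FV FE R B"
  have subgraph: "graph (FV i) (FE i) \<and> FV i \<subseteq> V \<and> FE i \<subseteq> E" if "i \<in> {..<k}" for i
    using forests that unfolding rooted_forest_subgraph_def forest_def by simp
  have "tree_decomposition V E TV TE ?B'"
    using tree_decomposition_add_roots[OF td subgraph] .
  moreover have "td_width TV ?B' \<le> 1 * (w + 1) * (k + 1)"
  proof -
    have "finite V"
      using \<open>graph V E\<close> by (simp add: graph_def)
    moreover have "r = r'"
      if "i \<in> {..<k}" "r \<in> R i" "r' \<in> R i"
        "reachable (FV i) (FE i) v r" "reachable (FV i) (FE i) v r'" for i v r r'
      using rooted_forest_subgraph_root_unique[OF _ that(2-5)] forests that(1) by blast
    ultimately have "td_width TV ?B' + 1 \<le> (td_width TV B + 1) * (card {..<k} + 1)"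
      by (rule td_width_add_roots_le[OF td _ finite_lessThan])
    then show ?thesis
      using \<open>td_width TV B = w\<close> by simp
  qed
  moreover have "\<exists>t\<in>TV. v \<in> ?B' t \<and> r \<in> ?B' t"
    if "i < k" "r \<in> R i" "reachable (FV i) (FE i) v r" for i r v
  proof -
    have "FV i \<subseteq> V"
      using subgraph that(1) by simp
    moreover have "i \<in> {..<k}"
      using that(1) by simp
    ultimately show ?thesis
      using add_roots_joins_vertex_root[OF td, where i = i and R = R and FV = FV and FE = FE] that(2,3)
      by blast
  qed
  ultimately show "\<exists>(TV'::nat set) TE' B'. tree_decomposition V E TV' TE' B' \<and>
      td_width TV' B' \<le> 1 * (w + 1) * (k + 1) \<and>
      (\<forall>i<k. \<forall>r\<in>R i. \<forall>v\<in>FV i. reachable (FV i) (FE i) v r \<longrightarrow> (\<exists>t\<in>TV'. v \<in> B' t \<and> r \<in> B' t))"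
    by blast
qed

end
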